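(* Let $\mathcal{A}$ be a linear hyperplane arrangement in $\mathbb{R}^n$, $i\in\{0,\dots,k\}$, $P\in L(\mathcal{A}^{(k-i)})$ and $U\in\mathcal{S}_{i,P}$. Then $$L_U(\mathcal{A})=\{X\in L_{k-i}(\mathcal{A}):P\not\subseteq H(X)\},\qquad \{X\in L_{k-i}(\mathcal{A}):\Delta(U\cap(U^\perp+T^\perp))\in H(X)\}=\{X\in L_{k-i}(\mathcal{A}):P\subseteq H(X)\}.$$ In particular, $L_{U_1}(\mathcal{A})=L_{U_2}(\mathcal{A})$ for all $U_1,U_2\in\mathcal{S}_{i,P}$.
   Context: $T=\bigcap_{H\in\mathcal{A}}H$; $L(\mathcal{A})$ is the intersection lattice (incl. $\mathbb{R}^n$), $L_j(\mathcal{A})$ its elements of codimension $j$. Plücker coordinates $\Delta(W)=(\Delta_I(W))_{I\in\binom{[n]}{d}}$ for a $d$-dimensional $W$ ($\Delta_I$ = minor on columns $I$ of a row-basis matrix, up to scalar). For $X\in L_j(\mathcal{A})$, $H(X)=\{x\in\mathbb{R}^{\binom{[n]}{j}}:\sum_I(-1)^{j(j+1)/2+\sum_{i\in I}i}\Delta_{[n]\setminus I}(X)x_I=0\}$; $\mathcal{A}^{(j)}=\{H(X):X\in L_j(\mathcal{A})\}$. For a flat $P$ of an arrangement $\mathcal{B}$, $P^\circ=P\setminus\bigcup\{Q\in L(\mathcal{B}):Q\subsetneq P\}$. $\mathcal{S}_{i,P}=\{U\in\mathrm{Gr}(k,n):\dim(U\cap T)=i,\ \Delta(U\cap(U^\perp+T^\perp))\in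 P^\circ\}$. For $U$ with $\dim(U\cap T)=i$, $L_U(\mathcal{A})=\{X\in L_{k-i}(\mathcal{A}):X\oplus(U\cap(U^\perp+T^\perp))=\mathbb{R}^n\}$. *)

theory Defs
  imports "HOL-Analysis.Analysis"
begin

text \<open>Ambient space R^n is  real^'n  with  n = CARD('n); the coordinates are
  numbered 1..n according to the linear order on 'n.\<close>

definition pos :: "'n::{finite,linorder} \<Rightarrow> nat" where
  "pos i = card {j. j \<le> i}"

definition codim :: "(real^'n::{finite,linorder}) set \<Rightarrow> nat" where
  "codim X = CARD('n) - dim X"

definition linear_hyperplane :: "(real^'n::{finite,linorder}) set \<Rightarrow> bool" where
  "linear_hyperplane H \<longleftrightarrow> (\<exists>a. a \<noteq> 0 \<and> H = {x. a \<bullet> x = 0})"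

definition hyperplane_arrangement :: "(real^'n::{finite,linorder}) set set \<Rightarrow> bool" where
  "hyperplane_arrangement A \<longleftrightarrow> finite A \<and> (\<forall>H\<in>A. linear_hyperplane H)"

definition int_lattice :: "'a set \<Rightarrow> 'a set set \<Rightarrow> 'a set set" where
  "int_lattice V B = {V \<inter> \<Inter>S | S. S \<subseteq> B}"

definition flat_interior :: "'a set \<Rightarrow> 'a set set \<Rightarrow> 'a set \<Rightarrow> 'a set" where
  "flat_interior V B P = P - \<Union>{Q \<in> int_lattice V B. Q \<subset> P}"

definition Lj :: "(real^'n::{finite,linorder}) set set \<Rightarrow> nat \<Rightarrow> (real^'n::{finite,linorder}) set set" where
  "Lj A j = {X \<in> int_lattice UNIV A. codim X = j}"

text \<open>Coordinate space R^(binom([n],j)): functions on subsets of the index type,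
  vanishing outside the j-element subsets.\<close>
definition coord_space :: "nat \<Rightarrow> ('n::{finite,linorder} set \<Rightarrow> real) set" where
  "coord_space j = {x. \<forall>I. card I \<noteq> j \<longrightarrow> x I = 0}"

text \<open>Minor of the (d x n) matrix with rows bs, on the columns I (in increasing order).\<close>
definition minor :: "(real^'n::{finite,linorder}) list \<Rightarrow> 'n set \<Rightarrow> real" where
  "minor bs I = (let d = length bs; cs = sorted_list_of_set I in
      (\<Sum>p | p permutes {0..<d}. of_int (sign p) * (\<Prod>r<d. (bs ! r) $ (cs ! p r))))"

definition pluecker :: "(real^'n::{finite,linorder}) set \<Rightarrow> ('n set \<Rightarrow> real)" where
  "pluecker W = (let bs = (SOME bs. length bs = dim W \<and> distinct bs \<and>
                         independent (set bs) \<and> span (set bs) = W)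
                 in (\<lambda>I. if card I = dim W then minor bs I else 0))"

definition HX :: "(real^'n::{finite,linorder}) set \<Rightarrow> ('n set \<Rightarrow> real) set" where
  "HX X = (let j = codim X in
     {x \<in> coord_space j.
        (\<Sum>I | card I = j. (-1::real) ^ (j * (j + 1) div 2 + (\<Sum>i\<in>I. pos i))
                             * pluecker X (UNIV - I) * x I) = 0})"


definition arr_j :: "(real^'n::{finite,linorder}) set set \<Rightarrow> nat \<Rightarrow> ('n set \<Rightarrow> real) set set" where
  "arr_j A j = HX ` Lj A j"

definition Tset :: "(real^'n::{finite,linorder}) set set \<Rightarrow> (real^'n::{finite,linorder}) set" where
  "Tset A = \<Inter>A"

definition Wsp :: "(real^'n::{finite,linorder}) set set \<Rightarrow> (real^'n::{finite,linorder}) set \<Rightarrow> (real^'n::{finite,linorder}) set" where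
  "Wsp A U = U \<inter> {x + y | x y. x \<in> orthogonal_comp U \<and> y \<in> orthogonal_comp (Tset A)}"

definition S_set :: "(real^'n::{finite,linorder}) set set \<Rightarrow> nat \<Rightarrow> nat
                     \<Rightarrow> ('n set \<Rightarrow> real) set \<Rightarrow> (real^'n::{finite,linorder}) set set" where
  "S_set A k i P = {U. subspace U \<and> dim U = k \<and> dim (U \<inter> Tset A) = i \<and>
      pluecker (Wsp A U) \<in> flat_interior (coord_space (k - i)) (arr_j A (k - i)) P}"

definition direct_sum_full :: "(real^'n::{finite,linorder}) set \<Rightarrow> (real^'n::{finite,linorder}) set \<Rightarrow> bool" where
  "direct_sum_full X W \<longleftrightarrow> {x + y | x y. x \<in> X \<and> y \<in> W} = UNIV \<and> X \<inter> W = {0}"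

definition LU :: "(real^'n::{finite,linorder}) set set \<Rightarrow> nat \<Rightarrow> (real^'n::{finite,linorder}) set \<Rightarrow> (real^'n::{finite,linorder}) set set" where
  "LU A k U = {X \<in> Lj A (k - dim (U \<inter> Tset A)). direct_sum_full X (Wsp A U)}"

end

(* Let T be the intersection of all hyperplanes of the arrangement and W = U \<inter> (U\<^sup>\<bottom> + T\<^sup>\<bottom>).
   Since U\<^sup>\<bottom> + T\<^sup>\<bottom> = (U \<inter> T)\<^sup>\<bottom>, W is the orthogonal complement of U \<inter> T inside U and
   has dimension k - i.  For a flat X of codimension k - i, the linear form defining H(X),
   evaluated at the Pluecker vector of W, is the generalised Laplace expansion along the first
   k - i rows of the n x n determinant whose rows are a basis of W followed by a basis of X.
   So the Pluecker vector of W lies in H(X) iff these n rows are dependent, i.e. iff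
   X \<inter> W \<noteq> 0, i.e. iff X and W are not complementary.
   Moreover the Pluecker vector of W lies in the interior of the flat P of the arrangement
   formed by the H(X); such a point lies on H(X) iff P \<subseteq> H(X), since otherwise P \<inter> H(X) would be
   a smaller flat containing it. *)

theory Submission
  imports Defs "Jordan_Normal_Form.Determinant"
begin

no_notation Matrix.vec_index (infixl \<open>$\<close> 100)

section \<open>Positions in a finite linearly ordered set\<close>

definition sorted_index :: "'a::linorder set \<Rightarrow> 'a \<Rightarrow> nat" where
  "sorted_index S s = card {t\<in>S. t < s}"

lemma strict_sorted_less_nth_iff:
  fixes xs :: "'a::linorder list"
  assumes "sorted_wrt (<) xs" "c < length xs"
  shows "{t\<in>set xs. t < xs ! c} = set (take c xs)"
proof (intro equalityI subsetI)
  fix t assume "t \<in> {t\<in>set xs. t < xs ! c}"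
  then obtain d where d: "d < length xs" "t = xs ! d" "xs ! d < xs ! c"
    by (auto simp: in_set_conv_nth)
  then have "d < c"
    using assms by (metis not_less_iff_gr_or_eq sorted_wrt_nth_less)
  then show "t \<in> set (take c xs)"
    using d by (auto simp: in_set_conv_nth)
next
  fix t assume "t \<in> set (take c xs)"
  then obtain d where "d < c" "t = xs ! d"
    using assms by (auto simp: in_set_conv_nth)
  then show "t \<in> {t\<in>set xs. t < xs ! c}"
    using assms by (simp add: sorted_wrt_nth_less)
qed

lemma sorted_index_nth:
  assumes "finite S" "c < card S"
  shows "sorted_index S (sorted_list_of_set S ! c) = c"
proof -
  let ?xs = "sorted_list_of_set S"
  have "{t\<in>S. t < ?xs ! c} = set (take c ?xs)"
    using strict_sorted_less_nth_iff[of ?xs c] assms by simp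
  then show ?thesis
    using assms by (simp add: sorted_index_def distinct_card)
qed

lemma sorted_index_remove:
  assumes "finite S" "s \<in> S" "i \<noteq> s"
  shows "sorted_index S i = sorted_index (S - {s}) i + (if s < i then 1 else 0)"
proof -
  have "{t\<in>S. t < i} = (if s < i then insert s else id) {t\<in>S - {s}. t < i}"
    using assms by auto
  then show ?thesis
    using assms by (simp add: sorted_index_def)
qed

lemma remove1_nth:
  assumes "distinct xs" "c < length xs"
  shows "remove1 (xs ! c) xs = take c xs @ drop (Suc c) xs"
proof -
  have "xs ! c \<notin> set (take c xs)"
    using assms by (simp add: in_set_conv_nth nth_eq_iff_index_eq)
  then show ?thesis
    using id_take_nth_drop[OF assms(2)] remove1_append[of "xs ! c" "take c xs"]
    by (metis remove1.simps(2))
qed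

lemma nth_sorted_list_of_set_remove:
  assumes "finite S" "c < card S" "j < card S - 1"
  shows "sorted_list_of_set (S - {sorted_list_of_set S ! c}) ! j
       = sorted_list_of_set S ! (if j < c then j else Suc j)"
  using assms by (simp add: sorted_list_of_set_remove remove1_nth nth_append min_def)

section \<open>Generalised Laplace expansion of minors\<close>

definition minor_mat :: "(real^'n::{finite,linorder}) list \<Rightarrow> 'n set \<Rightarrow> real Matrix.mat" where
  "minor_mat bs S =
     Matrix.mat (length bs) (length bs) (\<lambda>(r, c). bs ! r $ (sorted_list_of_set S ! c))"

lemma minor_eq_det: "minor bs I = Determinant.det (minor_mat bs I)"
  unfolding minor_def Determinant.det_def minor_mat_def Let_def
  by (simp add: atLeast0LessThan)

lemma mat_delete_minor_mat:
  fixes S :: "'n::{finite,linorder} set"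
  assumes "card S = Suc (length bs)" "c < card S"
  shows "mat_delete (minor_mat (b # bs) S) 0 c = minor_mat bs (S - {sorted_list_of_set S ! c})"
  using assms
  by (intro eq_matI) (simp_all add: minor_mat_def mat_delete_def nth_sorted_list_of_set_remove)

lemma minor_Cons:
  fixes S :: "'n::{finite,linorder} set"
  assumes "card S = Suc (length bs)"
  shows "minor (b # bs) S = (\<Sum>s\<in>S. (-1) ^ sorted_index S s * b $ s * minor bs (S - {s}))"
proof -
  let ?xs = "sorted_list_of_set S"
  let ?M = "minor_mat (b # bs) S"
  let ?f = "\<lambda>s. (-1) ^ sorted_index S s * b $ s * minor bs (S - {s})"
  have "minor (b # bs) S = (\<Sum>c<card S. ?M $$ (0, c) * cofactor ?M 0 c)"
    unfolding minor_eq_det using assms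
    by (subst laplace_expansion_row[of ?M "card S" 0]) (simp_all add: minor_mat_def)
  also have "\<dots> = (\<Sum>c<card S. (-1) ^ c * b $ (?xs ! c) * minor bs (S - {?xs ! c}))"
  proof (intro sum.cong refl)
    fix c assume "c \<in> {..<card S}"
    then have "cofactor ?M 0 c = (-1) ^ c * minor bs (S - {?xs ! c})"
      using assms by (simp add: cofactor_def mat_delete_minor_mat minor_eq_det)
    moreover have "?M $$ (0, c) = b $ (?xs ! c)"
      using \<open>c \<in> {..<card S}\<close> assms by (simp add: minor_mat_def)
    ultimately show "?M $$ (0, c) * cofactor ?M 0 c = (-1) ^ c * b $ (?xs ! c) * minor bs (S - {?xs ! c})"
      by simp
  qed
  also have "\<dots> = (\<Sum>c<card S. ?f (?xs ! c))"
    by (intro sum.cong refl) (simp add: sorted_index_nth)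
  also have "\<dots> = (\<Sum>s\<in>S. ?f s)"
    by (rule sum.reindex_bij_betw[OF bij_betw_nth]) simp_all
  finally show ?thesis .
qed

(* With 1-based positions p i this is the familiar sign (-1)^(\<Sum>i\<in>I. p i + |I|(|I|+1)/2). *)
definition laplace_sign :: "'a::linorder set \<Rightarrow> 'a set \<Rightarrow> real" where
  "laplace_sign S I = (-1) ^ ((\<Sum>i\<in>I. sorted_index S i) + (card I choose 2))"

lemma laplace_sign_remove:
  assumes "finite S" "J \<subseteq> S" "s \<in> J"
  shows "(-1) ^ sorted_index S s * laplace_sign (S - {s}) (J - {s})
       = laplace_sign S J * (-1) ^ sorted_index J s"
proof -
  define I where "I = J - {s}"
  have I: "finite I" "s \<notin> I" "J = insert s I"
    using assms finite_subset unfolding I_def by blast+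
  let ?below = "card {i\<in>I. i < s}" and ?above = "card {i\<in>I. s < i}"
  have "(\<Sum>i\<in>I. sorted_index S i) = (\<Sum>i\<in>I. sorted_index (S - {s}) i + (if s < i then 1 else 0))"
    using assms I by (intro sum.cong refl sorted_index_remove) auto
  then have sum_I: "(\<Sum>i\<in>I. sorted_index S i) = (\<Sum>i\<in>I. sorted_index (S - {s}) i) + ?above"
    using I by (simp add: sum.distrib sum.If_cases Int_def)
  have "{t\<in>J. t < s} = {i\<in>I. i < s}"
    using I by auto
  then have index_s: "sorted_index J s = ?below"
    by (simp add: sorted_index_def)
  have "I = {i\<in>I. i < s} \<union> {i\<in>I. s < i}"
    using I(2) by (auto simp: not_less_iff_gr_or_eq)
  then have "?below + ?above = card I"
    using I by (metis (no_types, lifting) card_Un_disjoint disjoint_iff finite_Un less_asym mem_Collect_eq)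
  moreover have "Suc (card I) choose 2 = (card I choose 2) + card I"
    by (simp add: numeral_2_eq_2)
  ultimately have exponent: "(\<Sum>i\<in>J. sorted_index S i) + (card J choose 2) + sorted_index J s
      = sorted_index S s + ((\<Sum>i\<in>I. sorted_index (S - {s}) i) + (card I choose 2)) + 2 * card I"
    using I sum_I index_s by simp
  have "(-1::real) ^ ((\<Sum>i\<in>J. sorted_index S i) + (card J choose 2) + sorted_index J s)
      = (-1) ^ (sorted_index S s + ((\<Sum>i\<in>I. sorted_index (S - {s}) i) + (card I choose 2)))"
    unfolding exponent by (simp add: power_add power_mult)
  then show ?thesis
    unfolding laplace_sign_def I_def[symmetric] by (simp add: power_add mult_ac)
qed

lemma sum_element_subset_swap:
  fixes f :: "'a \<Rightarrow> 'a set \<Rightarrow> 'b::comm_monoid_add"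
  assumes "finite S"
  shows "(\<Sum>s\<in>S. \<Sum>I | I \<subseteq> S - {s} \<and> card I = m. f s I)
       = (\<Sum>J | J \<subseteq> S \<and> card J = Suc m. \<Sum>s\<in>J. f s (J - {s}))"
proof -
  have "(\<Sum>I | I \<subseteq> S - {s} \<and> card I = m. f s I)
      = (\<Sum>J | J \<in> {J. J \<subseteq> S \<and> card J = Suc m} \<and> s \<in> J. f s (J - {s}))" if "s \<in> S" for s
    by (rule sum.reindex_bij_witness[where i = "\<lambda>J. J - {s}" and j = "insert s"])
       (use that in \<open>auto simp: subset_Diff_insert finite_subset[OF _ assms]\<close>)
  then have "(\<Sum>s\<in>S. \<Sum>I | I \<subseteq> S - {s} \<and> card I = m. f s I)
      = (\<Sum>s\<in>S. \<Sum>J | J \<in> {J. J \<subseteq> S \<and> card J = Suc m} \<and> s \<in> J. f s (J - {s}))"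
    by simp
  also have "\<dots> = (\<Sum>J | J \<subseteq> S \<and> card J = Suc m. \<Sum>s | s \<in> S \<and> s \<in> J. f s (J - {s}))"
    by (rule sum.swap_restrict) (use assms in \<open>auto intro: finite_subset[of _ "Pow S"]\<close>)
  also have "\<dots> = (\<Sum>J | J \<subseteq> S \<and> card J = Suc m. \<Sum>s\<in>J. f s (J - {s}))"
    by (intro sum.cong refl) (auto intro: arg_cong2[where f = sum])
  finally show ?thesis .
qed

lemma minor_Nil: "minor [] I = 1"
  by (simp add: minor_def)

lemma minor_append:
  fixes S :: "'n::{finite,linorder} set"
  assumes "card S = length ws + length xs"
  shows "minor (ws @ xs) S
       = (\<Sum>I | I \<subseteq> S \<and> card I = length ws. laplace_sign S I * minor ws I * minor xs (S - I))"
  using assms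
proof (induction ws arbitrary: S)
  case Nil
  have "{I. I \<subseteq> S \<and> card I = 0} = {{}}"
    using finite_subset[of _ S] by auto
  then show ?case
    by (simp add: minor_Nil laplace_sign_def numeral_2_eq_2)
next
  case (Cons w ws)
  let ?m = "length ws"
  let ?summand = "\<lambda>s I. (-1) ^ sorted_index S s * w $ s *
                 (laplace_sign (S - {s}) I * minor ws I * minor xs (S - {s} - I))"
  have "minor ((w # ws) @ xs) S = (\<Sum>s\<in>S. (-1) ^ sorted_index S s * w $ s * minor (ws @ xs) (S - {s}))"
    using Cons.prems by (simp add: minor_Cons)
  also have "\<dots> = (\<Sum>s\<in>S. \<Sum>I | I \<subseteq> S - {s} \<and> card I = ?m. ?summand s I)"
    using Cons by (intro sum.cong refl) (simp add: sum_distrib_left)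
  also have "\<dots> = (\<Sum>J | J \<subseteq> S \<and> card J = Suc ?m. \<Sum>s\<in>J. ?summand s (J - {s}))"
    by (simp add: sum_element_subset_swap)
  also have "\<dots> = (\<Sum>J | J \<subseteq> S \<and> card J = Suc ?m.
                    laplace_sign S J * minor (w # ws) J * minor xs (S - J))"
  proof (intro sum.cong refl)
    fix J assume J: "J \<in> {J. J \<subseteq> S \<and> card J = Suc ?m}"
    have summand_eq: "?summand s (J - {s}) = laplace_sign S J * ((-1) ^ sorted_index J s * w $ s * minor ws (J - {s}))
                              * minor xs (S - J)" if "s \<in> J" for s
    proof -
      have "S - {s} - (J - {s}) = S - J"
        using that by blast
      then show ?thesis
        using laplace_sign_remove[of S J s] J that by (simp add: mult_ac)
    qed
    have "(\<Sum>s\<in>J. ?summand s (J - {s})) = laplace_sign S J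
        * (\<Sum>s\<in>J. (-1) ^ sorted_index J s * w $ s * minor ws (J - {s})) * minor xs (S - J)"
      by (simp add: sum.cong[OF refl summand_eq] sum_distrib_left sum_distrib_right)
    then show "(\<Sum>s\<in>J. ?summand s (J - {s})) = laplace_sign S J * minor (w # ws) J * minor xs (S - J)"
      using J by (simp add: minor_Cons)
  qed
  finally show ?case
    by simp
qed

section \<open>Linear dependence of lists of vectors\<close>

definition list_comb :: "(nat \<Rightarrow> real) \<Rightarrow> 'a::real_vector list \<Rightarrow> 'a" where
  "list_comb c bs = (\<Sum>r<length bs. c r *\<^sub>R bs ! r)"

(* Unlike dependent (set bs), this also holds when bs contains a vector twice. *)
definition list_dependent :: "'a::real_vector list \<Rightarrow> bool" where
  "list_dependent bs \<longleftrightarrow> (\<exists>c. (\<exists>r<length bs. c r \<noteq> 0) \<and> list_comb c bs = 0)"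

lemma list_comb_append:
  "list_comb c (ws @ xs) = list_comb c ws + list_comb (\<lambda>r. c (length ws + r)) xs"
proof -
  have "(\<Sum>r<a + b. f r) = (\<Sum>r<a. f r) + (\<Sum>r<b. f (a + r))" for a b and f :: "nat \<Rightarrow> 'a"
    by (induction b) (simp_all add: add.assoc)
  then show ?thesis
    unfolding list_comb_def by (simp add: nth_append)
qed

lemma list_comb_in_span: "list_comb c bs \<in> span (set bs)"
  unfolding list_comb_def by (intro span_sum span_mul span_base) simp

lemma sum_set_eq_sum_nth:
  assumes "distinct bs"
  shows "(\<Sum>v\<in>set bs. f v) = (\<Sum>r<length bs. f (bs ! r))"
  using sum.reindex_bij_betw[OF bij_betw_nth[OF assms refl refl], of f] by simp

lemma in_span_set_imp_list_comb:
  assumes "distinct bs" "z \<in> span (set bs)"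
  obtains c where "z = list_comb c bs"
proof -
  obtain u where "z = (\<Sum>v\<in>set bs. u v *\<^sub>R v)"
    using assms(2) span_finite[of "set bs"] by auto
  then have "z = list_comb (\<lambda>r. u (bs ! r)) bs"
    unfolding list_comb_def using sum_set_eq_sum_nth[OF assms(1)] by simp
  then show thesis ..
qed

lemma independent_list_comb_eq_0:
  assumes "distinct bs" "independent (set bs)" "list_comb c bs = 0" "r < length bs"
  shows "c r = 0"
proof -
  define u where "u = c \<circ> inv_into {..<length bs} ((!) bs)"
  have u_nth: "u (bs ! r) = c r" if "r < length bs" for r
    using that assms(1) by (simp add: u_def inv_into_f_f inj_on_nth)
  have "(\<Sum>v\<in>set bs. u v *\<^sub>R v) = list_comb c bs"
    unfolding list_comb_def sum_set_eq_sum_nth[OF assms(1)] by (simp add: u_nth)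
  then have "\<forall>v\<in>set bs. u v = 0"
    using assms(2,3) dependent_finite[of "set bs"] by auto
  then show ?thesis
    using assms(4) u_nth by force
qed

lemma list_dependent_append_imp_span_Int:
  assumes "distinct ws" "independent (set ws)" "distinct xs" "independent (set xs)"
    and "list_dependent (ws @ xs)"
  shows "span (set ws) \<inter> span (set xs) \<noteq> {0}"
proof
  assume trivial: "span (set ws) \<inter> span (set xs) = {0}"
  obtain c r where c: "r < length (ws @ xs)" "c r \<noteq> 0" "list_comb c (ws @ xs) = 0"
    using assms(5) unfolding list_dependent_def by blast
  let ?c' = "\<lambda>r. c (length ws + r)"
  have z: "list_comb c ws = - list_comb ?c' xs"
    using c(3) by (simp add: list_comb_append eq_neg_iff_add_eq_0)
  have "list_comb c ws \<in> span (set ws) \<inter> span (set xs)"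
    using z list_comb_in_span span_neg by (metis IntI)
  then have "list_comb c ws = 0" "list_comb ?c' xs = 0"
    using trivial z by auto
  then have "c r = 0"
    using c(1) independent_list_comb_eq_0[OF assms(1,2), of c]
      independent_list_comb_eq_0[OF assms(3,4), of ?c' "r - length ws"]
    by (cases "r < length ws") auto
  then show False
    using c(2) by contradiction
qed

lemma span_Int_imp_list_dependent_append:
  assumes "distinct ws" "distinct xs" "z \<in> span (set ws)" "z \<in> span (set xs)" "z \<noteq> 0"
  shows "list_dependent (ws @ xs)"
proof -
  obtain a where a: "z = list_comb a ws"
    using in_span_set_imp_list_comb[OF assms(1,3)] .
  obtain b where b: "z = list_comb b xs"
    using in_span_set_imp_list_comb[OF assms(2,4)] .
  define c where "c r = (if r < length ws then a r else - b (r - length ws))" for r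
  have "list_comb c (ws @ xs) = list_comb a ws - list_comb b xs"
    unfolding list_comb_append by (simp add: c_def list_comb_def sum_negf)
  then have "list_comb c (ws @ xs) = 0"
    using a b by simp
  moreover have "\<exists>r<length ws. a r \<noteq> 0"
  proof (rule ccontr)
    assume "\<not> (\<exists>r<length ws. a r \<noteq> 0)"
    then have "list_comb a ws = 0"
      by (simp add: list_comb_def)
    then show False
      using a assms(5) by simp
  qed
  ultimately show "list_dependent (ws @ xs)"
    unfolding list_dependent_def by (intro exI[of _ c]) (metis c_def trans_less_add1 length_append)
qed

lemma list_dependent_append_iff:
  assumes "distinct ws" "independent (set ws)" "distinct xs" "independent (set xs)"
  shows "list_dependent (ws @ xs) \<longleftrightarrow> span (set ws) \<inter> span (set xs) \<noteq> {0}"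
  using list_dependent_append_imp_span_Int[OF assms] span_Int_imp_list_dependent_append[OF assms(1,3)]
    span_zero by blast

lemma transpose_minor_mat_mult_eq_0_iff:
  fixes L :: "(real^'n::{finite,linorder}) list"
  assumes "length L = CARD('n)" "v \<in> carrier_vec CARD('n)"
  shows "transpose_mat (minor_mat L UNIV) *\<^sub>v v = 0\<^sub>v CARD('n)
     \<longleftrightarrow> list_comb (Matrix.vec_index v) L = 0"
proof -
  let ?xs = "sorted_list_of_set (UNIV :: 'n set)"
  have "Matrix.vec_index (transpose_mat (minor_mat L UNIV) *\<^sub>v v) c = list_comb (Matrix.vec_index v) L $ (?xs ! c)"
    if "c < CARD('n)" for c
    using that assms
    by (simp add: minor_mat_def list_comb_def sum_component scalar_prod_def atLeast0LessThan mult.commute)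
  then have "transpose_mat (minor_mat L UNIV) *\<^sub>v v = 0\<^sub>v CARD('n)
      \<longleftrightarrow> (\<forall>c<length ?xs. list_comb (Matrix.vec_index v) L $ (?xs ! c) = 0)"
    using assms by (auto simp: vec_eq_iff minor_mat_def)
  also have "\<dots> \<longleftrightarrow> (\<forall>k. list_comb (Matrix.vec_index v) L $ k = 0)"
    using all_set_conv_all_nth[of ?xs "\<lambda>k. list_comb (Matrix.vec_index v) L $ k = 0"] by simp
  finally show ?thesis
    by (simp add: Finite_Cartesian_Product.vec_eq_iff)
qed

lemma minor_UNIV_eq_0_iff:
  fixes L :: "(real^'n::{finite,linorder}) list"
  assumes "length L = CARD('n)"
  shows "minor L UNIV = 0 \<longleftrightarrow> list_dependent L"
proof -
  let ?n = "CARD('n)"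
  let ?M = "minor_mat L UNIV"
  have M: "?M \<in> carrier_mat ?n ?n" "transpose_mat ?M \<in> carrier_mat ?n ?n"
    using assms by (simp_all add: minor_mat_def)
  have "minor L UNIV = Determinant.det (transpose_mat ?M)"
    unfolding minor_eq_det using det_transpose[OF M(1)] by simp
  then have "minor L UNIV = 0 \<longleftrightarrow>
      (\<exists>v. v \<in> carrier_vec ?n \<and> v \<noteq> 0\<^sub>v ?n \<and> list_comb (Matrix.vec_index v) L = 0)"
    using det_0_iff_vec_prod_zero_field[OF M(2)] transpose_minor_mat_mult_eq_0_iff[OF assms] by auto
  also have "\<dots> \<longleftrightarrow> list_dependent L"
  proof
    assume "\<exists>v. v \<in> carrier_vec ?n \<and> v \<noteq> 0\<^sub>v ?n \<and> list_comb (Matrix.vec_index v) L = 0"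
    then obtain v where "v \<in> carrier_vec ?n" "v \<noteq> 0\<^sub>v ?n" "list_comb (Matrix.vec_index v) L = 0"
      by blast
    then show "list_dependent L"
      unfolding list_dependent_def using assms by (metis eq_vecI index_zero_vec carrier_vecD)
  next
    assume "list_dependent L"
    then obtain c r where c: "r < ?n" "c r \<noteq> 0" "list_comb c L = 0"
      using assms unfolding list_dependent_def by auto
    have "list_comb (Matrix.vec_index (Matrix.vec ?n c)) L = list_comb c L"
      using assms unfolding list_comb_def by (intro sum.cong) auto
    moreover have "Matrix.vec ?n c \<noteq> 0\<^sub>v ?n"
      using c by (metis index_vec index_zero_vec(1))
    ultimately show "\<exists>v. v \<in> carrier_vec ?n \<and> v \<noteq> 0\<^sub>v ?n \<and> list_comb (Matrix.vec_index v) L = 0"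
      using c by (intro exI[of _ "Matrix.vec ?n c"]) simp
  qed
  finally show ?thesis .
qed

section \<open>Flats and the subspace W\<close>

lemma subspace_flat:
  assumes "hyperplane_arrangement A" "X \<in> int_lattice UNIV A"
  shows "subspace X"
proof -
  obtain S where S: "S \<subseteq> A" "X = \<Inter>S"
    using assms(2) unfolding int_lattice_def by blast
  have "subspace H" if "H \<in> A" for H
  proof -
    obtain a where "H = {x. a \<bullet> x = 0}"
      using assms(1) \<open>H \<in> A\<close> unfolding hyperplane_arrangement_def linear_hyperplane_def by blast
    then show ?thesis
      by (simp add: subspace_hyperplane)
  qed
  then show ?thesis
    using S by (metis subsetD subspace_Inter)
qed

lemma subspace_Tset:
  assumes "hyperplane_arrangement A"
  shows "subspace (Tset A)"
  using subspace_flat[OF assms, of "\<Inter>A"] unfolding Tset_def int_lattice_def by blast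

lemma orthogonal_comp_Int:
  fixes U T :: "'a::euclidean_space set"
  assumes "subspace U" "subspace T"
  shows "(U \<inter> T)\<^sup>\<bottom> = {x + y | x y. x \<in> U\<^sup>\<bottom> \<and> y \<in> T\<^sup>\<bottom>}"
proof -
  let ?S = "{x + y | x y. x \<in> U\<^sup>\<bottom> \<and> y \<in> T\<^sup>\<bottom>}"
  have "U\<^sup>\<bottom> \<subseteq> ?S" "T\<^sup>\<bottom> \<subseteq> ?S"
    using subspace_0[OF subspace_orthogonal_comp] by force+
  then have "?S\<^sup>\<bottom> \<subseteq> U \<inter> T"
    using orthogonal_comp_anti_mono orthogonal_comp_self assms by blast
  moreover have "U \<inter> T \<subseteq> ?S\<^sup>\<bottom>"
    unfolding orthogonal_comp_def real_inner_class.orthogonal_def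
    by (auto simp: inner_add_left) (metis add.right_neutral inner_commute)
  ultimately have "?S\<^sup>\<bottom> = U \<inter> T"
    by blast
  then have "(U \<inter> T)\<^sup>\<bottom> = ?S\<^sup>\<bottom>\<^sup>\<bottom>"
    by simp
  also have "\<dots> = ?S"
    by (intro orthogonal_comp_self subspace_sums subspace_orthogonal_comp)
  finally show ?thesis .
qed

lemma dim_Int_orthogonal_comp:
  fixes U V :: "'a::euclidean_space set"
  assumes "subspace U" "subspace V" "V \<subseteq> U"
  shows "dim (U \<inter> V\<^sup>\<bottom>) + dim V = dim U"
proof -
  let ?W = "U \<inter> V\<^sup>\<bottom>"
  have W: "subspace ?W"
    using assms(1) subspace_inter subspace_orthogonal_comp by blast
  have "U \<subseteq> {x + y | x y. x \<in> V \<and> y \<in> ?W}"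
  proof
    fix u assume "u \<in> U"
    have "u \<in> V + V\<^sup>\<bottom>"
      using subspace_sum_orthogonal_comp[OF assms(2)] by simp
    then obtain a b where "u = a + b" "a \<in> V" "b \<in> V\<^sup>\<bottom>"
      by (rule set_plus_elim)
    moreover have "b \<in> U"
      using \<open>u \<in> U\<close> calculation assms by (metis add_diff_cancel_left' subsetD subspace_diff)
    ultimately show "u \<in> {x + y | x y. x \<in> V \<and> y \<in> ?W}"
      by blast
  qed
  then have sum: "{x + y | x y. x \<in> V \<and> y \<in> ?W} = U"
    using assms by (auto intro: subspace_add)
  have int: "V \<inter> ?W = {0}"
    using orthogonal_Int_0[OF assms(2)] subspace_0[OF assms(1)] by blast
  show ?thesis
    using dim_sums_Int[OF assms(2) W] unfolding sum int by simp
qed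

lemma Wsp_eq:
  assumes "hyperplane_arrangement A" "subspace U"
  shows "Wsp A U = U \<inter> (U \<inter> Tset A)\<^sup>\<bottom>"
  unfolding Wsp_def orthogonal_comp_Int[OF assms(2) subspace_Tset[OF assms(1)]] ..

lemma subspace_Wsp:
  assumes "hyperplane_arrangement A" "subspace U"
  shows "subspace (Wsp A U)"
  unfolding Wsp_eq[OF assms] using assms(2) subspace_inter subspace_orthogonal_comp by blast

lemma dim_Wsp:
  assumes "hyperplane_arrangement A" "subspace U"
  shows "dim (Wsp A U) = dim U - dim (U \<inter> Tset A)"
  using dim_Int_orthogonal_comp[OF assms(2) subspace_inter[OF assms(2) subspace_Tset[OF assms(1)]]]
  unfolding Wsp_eq[OF assms] by simp

lemma direct_sum_full_iff:
  fixes X W :: "(real^'n::{finite,linorder}) set"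
  assumes "subspace X" "subspace W" "dim X + dim W = CARD('n)"
  shows "direct_sum_full X W \<longleftrightarrow> X \<inter> W = {0}"
proof
  assume trivial: "X \<inter> W = {0}"
  let ?S = "{x + y | x y. x \<in> X \<and> y \<in> W}"
  have "dim ?S = CARD('n)"
    using dim_sums_Int[OF assms(1,2)] assms(3) trivial by simp
  then have "?S = UNIV"
    using subspace_dim_equal[OF subspace_sums[OF assms(1,2)] subspace_UNIV] by simp
  then show "direct_sum_full X W"
    using trivial unfolding direct_sum_full_def by simp
qed (auto simp: direct_sum_full_def)

section \<open>Pluecker vectors and transversality\<close>

lemma obtain_pluecker_basis:
  fixes W :: "(real^'n::{finite,linorder}) set"
  assumes "subspace W"
  obtains bs where "length bs = dim W" "distinct bs" "independent (set bs)" "span (set bs) = W"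
    and "pluecker W = (\<lambda>I. if card I = dim W then minor bs I else 0)"
proof -
  let ?basis = "\<lambda>bs. length bs = dim W \<and> distinct bs \<and> independent (set bs) \<and> span (set bs) = W"
  obtain B where B: "B \<subseteq> W" "independent B" "W \<subseteq> span B" "card B = dim W"
    using basis_exists[of W] by blast
  then obtain bs where "set bs = B" "distinct bs"
    using finite_distinct_list finiteI_independent by blast
  then have "?basis bs"
    using B assms span_minimal distinct_card by (metis span_subspace)
  then have "?basis (SOME bs. ?basis bs)"
    by (rule someI)
  then show thesis
    using that unfolding pluecker_def Let_def by blast
qed

lemma pos_eq_sorted_index: "pos i = sorted_index UNIV i + 1"
proof -
  have "{j. j \<le> i} = insert i {t\<in>UNIV. t < i}"
    by auto
  then show ?thesis
    unfolding pos_def sorted_index_def by simp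
qed

lemma HX_sign_eq_laplace_sign:
  fixes I :: "'n::{finite,linorder} set"
  assumes "card I = j"
  shows "(-1::real) ^ (j * (j + 1) div 2 + (\<Sum>i\<in>I. pos i)) = laplace_sign UNIV I"
proof -
  have "j * (j + 1) div 2 = (j choose 2) + j"
    using choose_two[of "Suc j"] by (simp add: numeral_2_eq_2 mult.commute)
  moreover have "(\<Sum>i\<in>I. pos i) = (\<Sum>i\<in>I. sorted_index UNIV i) + j"
    unfolding pos_eq_sorted_index sum.distrib using assms by simp
  ultimately have "j * (j + 1) div 2 + (\<Sum>i\<in>I. pos i)
      = ((\<Sum>i\<in>I. sorted_index UNIV i) + (card I choose 2)) + 2 * j"
    using assms by simp
  then show ?thesis
    unfolding laplace_sign_def by (simp add: power_add power_mult)
qed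

lemma HX_form_eq_minor_append:
  fixes ws xs :: "(real^'n::{finite,linorder}) list"
  assumes "length ws + length xs = CARD('n)"
  shows "(\<Sum>I | card I = length ws.
            (-1::real) ^ (length ws * (length ws + 1) div 2 + (\<Sum>i\<in>I. pos i))
            * minor xs (UNIV - I) * minor ws I)
       = minor (ws @ xs) UNIV"
proof -
  have "(\<Sum>I | card I = length ws.
            (-1::real) ^ (length ws * (length ws + 1) div 2 + (\<Sum>i\<in>I. pos i))
            * minor xs (UNIV - I) * minor ws I)
      = (\<Sum>I | I \<subseteq> UNIV \<and> card I = length ws. laplace_sign UNIV I * minor ws I * minor xs (UNIV - I))"
  proof (rule sum.cong)
    fix I :: "'n set" assume "I \<in> {I. I \<subseteq> UNIV \<and> card I = length ws}"
    then show "(-1::real) ^ (length ws * (length ws + 1) div 2 + (\<Sum>i\<in>I. pos i))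
               * minor xs (UNIV - I) * minor ws I = laplace_sign UNIV I * minor ws I * minor xs (UNIV - I)"
      using HX_sign_eq_laplace_sign[of I "length ws"] by simp
  qed simp
  also have "\<dots> = minor (ws @ xs) UNIV"
    using assms by (simp add: minor_append)
  finally show ?thesis .
qed

lemma pluecker_in_HX_iff:
  fixes W :: "(real^'n::{finite,linorder}) set"
  assumes "hyperplane_arrangement A" "X \<in> Lj A (dim W)" "subspace W"
  shows "pluecker W \<in> HX X \<longleftrightarrow> \<not> direct_sum_full X W"
proof -
  let ?j = "dim W"
  have X: "subspace X" "codim X = ?j"
    using assms(2) subspace_flat[OF assms(1)] unfolding Lj_def by auto
  then have dim_X: "dim X = CARD('n) - ?j" "?j \<le> CARD('n)"
    using dim_subset_UNIV[of X] unfolding codim_def by auto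
  obtain ws where ws: "length ws = ?j" "distinct ws" "independent (set ws)" "span (set ws) = W"
      "pluecker W = (\<lambda>I. if card I = ?j then minor ws I else 0)"
    using obtain_pluecker_basis[OF assms(3)] .
  obtain xs where xs: "length xs = dim X" "distinct xs" "independent (set xs)" "span (set xs) = X"
      "pluecker X = (\<lambda>I. if card I = dim X then minor xs I else 0)"
    using obtain_pluecker_basis[OF X(1)] .
  have "pluecker W \<in> coord_space ?j"
    using ws(5) by (simp add: coord_space_def)
  then have "pluecker W \<in> HX X \<longleftrightarrow>
      (\<Sum>I | card I = ?j. (-1::real) ^ (?j * (?j + 1) div 2 + (\<Sum>i\<in>I. pos i))
                           * pluecker X (UNIV - I) * pluecker W I) = 0"
    unfolding HX_def Let_def X(2) by simp
  also have "(\<Sum>I | card I = ?j. (-1::real) ^ (?j * (?j + 1) div 2 + (\<Sum>i\<in>I. pos i))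
                                 * pluecker X (UNIV - I) * pluecker W I)
           = (\<Sum>I | card I = length ws.
                (-1::real) ^ (length ws * (length ws + 1) div 2 + (\<Sum>i\<in>I. pos i))
                * minor xs (UNIV - I) * minor ws I)"
    using ws(1,5) xs(5) dim_X by (intro sum.cong) (auto simp: card_Diff_subset)
  also have "\<dots> = minor (ws @ xs) UNIV"
    using ws(1) xs(1) dim_X by (intro HX_form_eq_minor_append) simp
  also have "\<dots> = 0 \<longleftrightarrow> span (set ws) \<inter> span (set xs) \<noteq> {0}"
    using ws xs dim_X by (simp add: minor_UNIV_eq_0_iff list_dependent_append_iff)
  also have "\<dots> \<longleftrightarrow> \<not> direct_sum_full X W"
    using direct_sum_full_iff[OF X(1) assms(3)] ws(4) xs(4) dim_X by (auto simp: Int_commute)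
  finally show ?thesis .
qed

lemma flat_interior_mem_iff_subset:
  assumes "P \<in> int_lattice V B" "p \<in> flat_interior V B P" "H \<in> B"
  shows "p \<in> H \<longleftrightarrow> P \<subseteq> H"
proof
  assume "p \<in> H"
  obtain S where S: "S \<subseteq> B" "P = V \<inter> \<Inter>S"
    using assms(1) unfolding int_lattice_def by blast
  then have "P \<inter> H \<in> int_lattice V B"
    using assms(3) unfolding int_lattice_def by (intro CollectI exI[of _ "insert H S"]) auto
  then show "P \<subseteq> H"
    using assms(2) \<open>p \<in> H\<close> unfolding flat_interior_def by blast
next
  assume "P \<subseteq> H"
  then show "p \<in> H"
    using assms(2) unfolding flat_interior_def by blast
qed

lemma S_set_imp_LU_eq:
  assumes "hyperplane_arrangement A"
    and "P \<in> int_lattice (coord_space (k - i)) (arr_j A (k - i))"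
    and "U \<in> S_set A k i P"
  shows "{X \<in> Lj A (k - i). pluecker (Wsp A U) \<in> HX X} = {X \<in> Lj A (k - i). P \<subseteq> HX X}"
    and "LU A k U = {X \<in> Lj A (k - i). \<not> P \<subseteq> HX X}"
proof -
  have U: "subspace U" "dim U = k" "dim (U \<inter> Tset A) = i"
      "pluecker (Wsp A U) \<in> flat_interior (coord_space (k - i)) (arr_j A (k - i)) P"
    using assms(3) unfolding S_set_def by auto
  have W: "subspace (Wsp A U)" "dim (Wsp A U) = k - i"
    using subspace_Wsp dim_Wsp assms(1) U by auto
  have in_HX_iff: "pluecker (Wsp A U) \<in> HX X \<longleftrightarrow> P \<subseteq> HX X" if "X \<in> Lj A (k - i)" for X
    using flat_interior_mem_iff_subset[OF assms(2) U(4)] that unfolding arr_j_def by blast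
  then show "{X \<in> Lj A (k - i). pluecker (Wsp A U) \<in> HX X} = {X \<in> Lj A (k - i). P \<subseteq> HX X}"
    by blast
  show "LU A k U = {X \<in> Lj A (k - i). \<not> P \<subseteq> HX X}"
    unfolding LU_def U(3) using pluecker_in_HX_iff[OF assms(1) _ W(1)] in_HX_iff W(2) by auto
qed

theorem mainTheorem8:
  fixes A :: "(real^'n::{finite,linorder}) set set" and k i :: nat
    and P :: "('n set \<Rightarrow> real) set" and U :: "(real^'n::{finite,linorder}) set"
  assumes "hyperplane_arrangement A"
    and "i \<le> k"
    and "P \<in> int_lattice (coord_space (k - i)) (arr_j A (k - i))"
    and "U \<in> S_set A k i P"
  shows "LU A k U = {X \<in> Lj A (k - i). \<not> P \<subseteq> HX X} \<and>
         {X \<in> Lj A (k - i). pluecker (Wsp A U) \<in> HX X} = {X \<in> Lj A (k - i). P \<subseteq> HX X} \<and>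
         (\<forall>U1\<in>S_set A k i P. \<forall>U2\<in>S_set A k i P. LU A k U1 = LU A k U2)"
  using S_set_imp_LU_eq[OF assms(1,3)] assms(4) by blast

end
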